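(* Let $A$ be a set of regular cardinals without a maximum, and let $\kappa\in\operatorname{spec}(A)$ with $\kappa\geq\sup(A)$. Let $\mathcal{F}\subseteq\prod A$ be any set of size $\kappa$ such that every $\kappa$-sized subset of $\mathcal{F}$ is unbounded in $(\prod A,<)$. Then for every $\mathcal{F}_0\subseteq\mathcal{F}$ of size $\kappa$, the set $\operatorname{ub}(\mathcal{F}_0)$ is infinite.
   Context: $\prod A$ is the set of functions $f$ on $A$ with $f(a)\in a$, ordered pointwise ($f<g$ iff $f(a)<g(a)$ for all $a\in A$). $\operatorname{spec}(A)$ is the set of regular $\lambda$ for which some $\mathcal{F}\subseteq\prod A$ of size $\lambda$ has every $\lambda$-sized subset unbounded in $(\prod A,<)$. For $\mathcal{G}\subseteq\prod A$, $\operatorname{ub}(\mathcal{G})$ is the set of $a\in A$ such that $\{f(a):f\in\mathcal{G}\}$ is unbounded in $a$. *)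

theory Defs
  imports Main "HOL-Library.FuncSet"
begin

text \<open>Ordinals are modelled as elements of an arbitrary well-ordered type 'o;
  the ordinal alpha is identified with its initial segment {..<alpha}.\<close>

definition is_cardinal :: "'o::wellorder \<Rightarrow> bool" where
  "is_cardinal \<alpha> \<longleftrightarrow> (\<forall>\<beta><\<alpha>. (card_of {..<\<beta>}, card_of {..<\<alpha>}) \<notin> ordIso)"

definition regular_cardinal :: "'o::wellorder \<Rightarrow> bool" where
  "regular_cardinal \<alpha> \<longleftrightarrow> is_cardinal \<alpha> \<and> infinite {..<\<alpha>} \<and>
     (\<forall>X \<subseteq> {..<\<alpha>}. (\<forall>\<beta><\<alpha>. \<exists>\<gamma>\<in>X. \<beta> \<le> \<gamma>) \<longrightarrow> (card_of X, card_of {..<\<alpha>}) \<in> ordIso)"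

definition prodA :: "'o::wellorder set \<Rightarrow> ('o \<Rightarrow> 'o) set" where
  "prodA A = (\<Pi>\<^sub>E a\<in>A. {..<a})"

definition ptw_less :: "'o::wellorder set \<Rightarrow> ('o \<Rightarrow> 'o) \<Rightarrow> ('o \<Rightarrow> 'o) \<Rightarrow> bool" where
  "ptw_less A f g \<longleftrightarrow> (\<forall>a\<in>A. f a < g a)"

definition unbounded_in_prod :: "'o::wellorder set \<Rightarrow> ('o \<Rightarrow> 'o) set \<Rightarrow> bool" where
  "unbounded_in_prod A G \<longleftrightarrow> \<not> (\<exists>g\<in>prodA A. \<forall>f\<in>G. ptw_less A f g)"

definition in_spec :: "'o::wellorder set \<Rightarrow> 'k rel \<Rightarrow> bool" where
  "in_spec A \<kappa> \<longleftrightarrow> Cinfinite \<kappa> \<and> regularCard \<kappa> \<and>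
     (\<exists>F \<subseteq> prodA A. (card_of F, \<kappa>) \<in> ordIso \<and>
        (\<forall>G \<subseteq> F. (card_of G, \<kappa>) \<in> ordIso \<longrightarrow> unbounded_in_prod A G))"

definition ub :: "'o::wellorder set \<Rightarrow> ('o \<Rightarrow> 'o) set \<Rightarrow> 'o set" where
  "ub A G = {a\<in>A. \<not> (\<exists>\<beta><a. \<forall>f\<in>G. f a \<le> \<beta>)}"

end

theory Submission
  imports Defs
begin

text \<open>Since \<open>A\<close> has no maximum, every \<open>a \<in> A\<close> has fewer than \<open>\<kappa>\<close>
  predecessors. If \<open>ub(F\<^sub>0)\<close> were finite, the pigeonhole principle for the regular
  cardinal \<open>\<kappa>\<close>, applied once for each of these finitely many coordinates, would give
  \<open>G \<subseteq> F\<^sub>0\<close> of size \<open>\<kappa>\<close> that is bounded below \<open>a\<close> at every coordinate \<open>a \<in> A\<close>. As each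
  \<open>a\<close> is a limit ordinal, bumping these bounds up by one yields an upper bound of \<open>G\<close>
  in \<open>\<Prod>A\<close>, contradicting the choice of \<open>F\<close>.\<close>

unbundle cardinal_syntax

lemma regular_cardinal_limit:
  fixes a b :: "'o::wellorder"
  assumes reg: "regular_cardinal a" and "b < a"
  shows "\<exists>c. b < c \<and> c < a"
proof (rule ccontr)
  assume "\<not> ?thesis"
  then have "\<forall>\<beta><a. \<beta> \<le> b" by (meson not_le)
  then have "\<forall>\<beta><a. \<exists>\<gamma>\<in>{b}. \<beta> \<le> \<gamma>" by blast
  with reg \<open>b < a\<close> have "|{b}| =o |{..<a}|" by (auto simp: regular_cardinal_def)
  then have "finite {..<a}" using card_of_ordIso_finite by blast
  with reg show False by (simp add: regular_cardinal_def)
qed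

lemma card_of_lessThan_ordLess:
  fixes a a' :: "'o::wellorder"
  assumes "is_cardinal a'" and "a < a'"
  shows "|{..<a}| <o |{..<a'}|"
proof -
  have "|{..<a}| \<le>o |{..<a'}|" by (rule card_of_mono1) (use assms(2) in auto)
  moreover have "\<not> |{..<a}| =o |{..<a'}|" using assms by (auto simp: is_cardinal_def)
  ultimately show ?thesis using ordLeq_iff_ordLess_or_ordIso by blast
qed

lemma card_of_lessThan_ordLess_if_no_max:
  fixes A :: "'o::wellorder set" and \<kappa> :: "'k rel"
  assumes "\<forall>a\<in>A. regular_cardinal a" and "\<not> (\<exists>m\<in>A. \<forall>a\<in>A. a \<le> m)"
    and "\<forall>a\<in>A. |{..<a}| \<le>o \<kappa>" and "a \<in> A"
  shows "|{..<a}| <o \<kappa>"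
proof -
  from assms(2,4) obtain a' where a': "a' \<in> A" "a < a'" by (meson not_le)
  with assms(1) have "is_cardinal a'" by (simp add: regular_cardinal_def)
  with a'(2) have "|{..<a}| <o |{..<a'}|" by (intro card_of_lessThan_ordLess)
  with a'(1) assms(3) show ?thesis using ordLess_ordLeq_trans by blast
qed

lemma bounded_outside_ub:
  assumes "G \<subseteq> F" and "a \<in> A - ub A F"
  shows "\<exists>\<beta><a. \<forall>f\<in>G. f a \<le> \<beta>"
  using assms unfolding ub_def by blast

lemma regularCard_pigeonhole:
  fixes \<kappa> :: "'k rel" and h :: "'a \<Rightarrow> 'b"
  assumes reg: "regularCard \<kappa>" and inf: "Cinfinite \<kappa>"
    and G: "|G| =o \<kappa>" and h: "h ` G \<subseteq> B" and B: "|B| <o \<kappa>"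
  shows "\<exists>b\<in>B. |{x\<in>G. h x = b}| =o \<kappa>"
proof (rule ccontr)
  assume no_large_fibre: "\<not> ?thesis"
  have "\<forall>b\<in>B. |{x\<in>G. h x = b}| <o \<kappa>"
  proof
    fix b assume "b \<in> B"
    have "|{x\<in>G. h x = b}| \<le>o |G|" by (rule card_of_mono1) blast
    from this G have "|{x\<in>G. h x = b}| \<le>o \<kappa>" by (rule ordLeq_ordIso_trans)
    moreover have "\<not> |{x\<in>G. h x = b}| =o \<kappa>" using no_large_fibre \<open>b \<in> B\<close> by blast
    ultimately show "|{x\<in>G. h x = b}| <o \<kappa>" by (simp add: ordLeq_iff_ordLess_or_ordIso)
  qed
  then have "|\<Union>b\<in>B. {x\<in>G. h x = b}| <o \<kappa>"
    by (rule card_of_UNION_ordLess_infinite_Field_regularCard[OF reg inf B])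
  moreover have "(\<Union>b\<in>B. {x\<in>G. h x = b}) = G" using h by auto
  ultimately have "|G| <o \<kappa>" by simp
  with G show False using not_ordLess_ordIso by blast
qed

lemma bounded_subfamily_finite:
  fixes \<kappa> :: "'k rel" and G :: "('o::wellorder \<Rightarrow> 'o) set"
  assumes reg: "regularCard \<kappa>" and inf: "Cinfinite \<kappa>"
    and G: "G \<subseteq> prodA A" "|G| =o \<kappa>"
    and U: "finite U" "U \<subseteq> A" and small: "\<forall>a\<in>U. |{..<a}| <o \<kappa>"
  obtains G' where "G' \<subseteq> G" "|G'| =o \<kappa>" "\<forall>a\<in>U. \<exists>\<beta><a. \<forall>f\<in>G'. f a \<le> \<beta>"
proof -
  from U small have "\<exists>G'\<subseteq>G. |G'| =o \<kappa> \<and> (\<forall>a\<in>U. \<exists>\<beta><a. \<forall>f\<in>G'. f a \<le> \<beta>)"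
  proof (induction U rule: finite_induct)
    case empty
    with G(2) show ?case by blast
  next
    case (insert a U)
    then obtain G1 where G1: "G1 \<subseteq> G" "|G1| =o \<kappa>" "\<forall>a\<in>U. \<exists>\<beta><a. \<forall>f\<in>G1. f a \<le> \<beta>"
      by auto
    have coordinate: "(\<lambda>f. f a) ` G1 \<subseteq> {..<a}"
      using G(1) G1(1) insert.prems(1) by (auto simp: prodA_def)
    obtain \<beta> where "\<beta> < a" and fibre: "|{f\<in>G1. f a = \<beta>}| =o \<kappa>"
      using regularCard_pigeonhole[OF reg inf G1(2) coordinate] insert.prems(2)
      by blast
    let ?G' = "{f\<in>G1. f a = \<beta>}"
    have "\<forall>a'\<in>insert a U. \<exists>\<beta>'<a'. \<forall>f\<in>?G'. f a' \<le> \<beta>'"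
    proof
      fix a' assume "a' \<in> insert a U"
      then consider "a' = a" | "a' \<in> U" by blast
      then show "\<exists>\<beta>'<a'. \<forall>f\<in>?G'. f a' \<le> \<beta>'"
      proof cases
        case 1
        with \<open>\<beta> < a\<close> show ?thesis by auto
      next
        case 2
        with G1(3) show ?thesis by blast
      qed
    qed
    moreover have "?G' \<subseteq> G" using G1(1) by blast
    ultimately show ?case using fibre by blast
  qed
  with that show ?thesis by blast
qed

lemma coordinatewise_bounded_imp_not_unbounded_in_prod:
  fixes A :: "'o::wellorder set" and G :: "('o \<Rightarrow> 'o) set"
  assumes reg: "\<forall>a\<in>A. regular_cardinal a"
    and bounded: "\<forall>a\<in>A. \<exists>\<beta><a. \<forall>f\<in>G. f a \<le> \<beta>"
  shows "\<not> unbounded_in_prod A G"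
proof -
  have "\<forall>a\<in>A. \<exists>\<gamma>. \<gamma> < a \<and> (\<forall>f\<in>G. f a < \<gamma>)"
  proof
    fix a assume "a \<in> A"
    with bounded obtain \<beta> where "\<beta> < a" and \<beta>: "\<forall>f\<in>G. f a \<le> \<beta>" by blast
    from reg \<open>a \<in> A\<close> have "regular_cardinal a" by blast
    from regular_cardinal_limit[OF this \<open>\<beta> < a\<close>] obtain \<gamma> where "\<beta> < \<gamma>" "\<gamma> < a"
      by blast
    with \<beta> show "\<exists>\<gamma>. \<gamma> < a \<and> (\<forall>f\<in>G. f a < \<gamma>)" using le_less_trans by blast
  qed
  then obtain g where g: "\<forall>a\<in>A. g a < a \<and> (\<forall>f\<in>G. f a < g a)" by (metis bchoice)
  then have "restrict g A \<in> prodA A" and "\<forall>f\<in>G. ptw_less A f (restrict g A)"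
    by (auto simp: prodA_def ptw_less_def)
  then show ?thesis by (auto simp: unbounded_in_prod_def)
qed

theorem lemma5p1:
  fixes A :: "'o::wellorder set" and \<kappa> :: "'k rel" and F :: "('o \<Rightarrow> 'o) set"
  assumes "\<forall>a\<in>A. regular_cardinal a"
    and "\<not> (\<exists>m\<in>A. \<forall>a\<in>A. a \<le> m)"
    and "card_order \<kappa>"
    and "in_spec A \<kappa>"
    and "\<forall>a\<in>A. (card_of {..<a}, \<kappa>) \<in> ordLeq"
    and "F \<subseteq> prodA A"
    and "(card_of F, \<kappa>) \<in> ordIso"
    and "\<forall>G \<subseteq> F. (card_of G, \<kappa>) \<in> ordIso \<longrightarrow> unbounded_in_prod A G"
  shows "\<forall>F0 \<subseteq> F. (card_of F0, \<kappa>) \<in> ordIso \<longrightarrow> infinite (ub A F0)"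
proof (intro allI impI notI)
  fix F0 assume F0: "F0 \<subseteq> F" "|F0| =o \<kappa>" and finite_ub: "finite (ub A F0)"
  have reg: "regularCard \<kappa>" and inf: "Cinfinite \<kappa>" using assms(4) by (auto simp: in_spec_def)
  have F0_prod: "F0 \<subseteq> prodA A" using F0(1) assms(6) by blast
  have ub_subset: "ub A F0 \<subseteq> A" by (auto simp: ub_def)
  then have small: "\<forall>a\<in>ub A F0. |{..<a}| <o \<kappa>"
    using card_of_lessThan_ordLess_if_no_max[OF assms(1,2,5)] by blast
  obtain G where G: "G \<subseteq> F0" "|G| =o \<kappa>" "\<forall>a\<in>ub A F0. \<exists>\<beta><a. \<forall>f\<in>G. f a \<le> \<beta>"
    using small by (rule bounded_subfamily_finite[OF reg inf F0_prod F0(2) finite_ub ub_subset])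
  have "\<forall>a\<in>A. \<exists>\<beta><a. \<forall>f\<in>G. f a \<le> \<beta>"
    using G(3) bounded_outside_ub[OF G(1)] by blast
  with assms(1) have "\<not> unbounded_in_prod A G"
    by (rule coordinatewise_bounded_imp_not_unbounded_in_prod)
  with assms(8) G(1,2) F0(1) show False by blast
qed

end
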